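(* Let $\mathscr{R}$ be the class of rook graphs. Then the class of all (finite, simple, undirected) graphs is transducible from $\mathscr{R}$; that is, there is a transduction ${\mathsf T}$ such that every graph belongs to ${\mathsf T}(\mathscr{R})$.
   Context: A rook graph has vertex set $\{1,\ldots,a\}\times\{1,\ldots,b\}$ for some $a,b\in\mathbb{N}$, and two distinct vertices $(i,j),(i',j')$ are adjacent iff $i=i'$ or $j=j'$. Graphs are viewed as relational structures with universe the vertex set and one symmetric irreflexive binary relation $\mathsf{adj}$; a $C$-colored graph additionally has a unary predicate for each color in the finite set $C$ (colors are arbitrary vertex subsets, not necessarily disjoint). A transduction ${\mathsf T}$ consists of a finite set of colors $C$ and a first-order formula $\varphi(x,y)$ over the signature of $C$-colored graphs. For a graph $G$, ${\mathsf T}(G)$ is the set of all graphs obtained by: (1) adding the colors of $C$ to $G$ arbitrarily, yielding $G^+$; (2) forming the graph $\varphi(G^+)$ on vertex set $V(G)$ in which distinct $u,v$ are adjacent iff $G^+\models\varphi(u,v)$ or $G^+\models\varphi(v,u)$; (3) taking an arbitrary induced subgraph of $\varphi(G^+)$. For a class $\mathscr{C}$, ${\mathsf T}(\mathscr{C})=\bigcup_{G\in\mathscr{C}}{\mathsf T}(G)$, and a class $\mathscr{D}$ is transducible from $\mathscr{C}$ if $\mathscr{D}\subseteq{\mathsf T}(\mathscr{C})$ for some transduction ${\mathsf T}$. *)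

theory Defs
  imports Main
begin

datatype fo =
    Adj nat nat
  | Eq nat nat
  | Col nat nat
  | Neg fo
  | Conj fo fo
  | Ex nat fo

fun fv :: "fo \<Rightarrow> nat set" where
  "fv (Adj x y) = {x, y}"
| "fv (Eq x y) = {x, y}"
| "fv (Col c x) = {x}"
| "fv (Neg p) = fv p"
| "fv (Conj p q) = fv p \<union> fv q"
| "fv (Ex x p) = fv p - {x}"

fun colors :: "fo \<Rightarrow> nat set" where
  "colors (Adj x y) = {}"
| "colors (Eq x y) = {}"
| "colors (Col c x) = {c}"
| "colors (Neg p) = colors p"
| "colors (Conj p q) = colors p \<union> colors q"
| "colors (Ex x p) = colors p"

fun holds :: "'a set \<Rightarrow> ('a \<Rightarrow> 'a \<Rightarrow> bool) \<Rightarrow> (nat \<Rightarrow> 'a \<Rightarrow> bool) \<Rightarrow> (nat \<Rightarrow> 'a) \<Rightarrow> fo \<Rightarrow> bool" where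
  "holds U adj col \<nu> (Adj x y) = adj (\<nu> x) (\<nu> y)"
| "holds U adj col \<nu> (Eq x y) = (\<nu> x = \<nu> y)"
| "holds U adj col \<nu> (Col c x) = col c (\<nu> x)"
| "holds U adj col \<nu> (Neg p) = (\<not> holds U adj col \<nu> p)"
| "holds U adj col \<nu> (Conj p q) = (holds U adj col \<nu> p \<and> holds U adj col \<nu> q)"
| "holds U adj col \<nu> (Ex x p) = (\<exists>u\<in>U. holds U adj col (\<nu>(x := u)) p)"

text \<open>A transduction is a finite color set C together with a formula \<phi>(x,y)
  (free variables among 0 = x and 1 = y) using only colors from C.\<close>

definition is_transduction :: "nat set \<Rightarrow> fo \<Rightarrow> bool" where
  "is_transduction C \<phi> \<longleftrightarrow> finite C \<and> colors \<phi> \<subseteq> C \<and> fv \<phi> \<subseteq> {0, 1}"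

definition phi_at :: "'a set \<Rightarrow> ('a \<Rightarrow> 'a \<Rightarrow> bool) \<Rightarrow> (nat \<Rightarrow> 'a \<Rightarrow> bool) \<Rightarrow> fo \<Rightarrow> 'a \<Rightarrow> 'a \<Rightarrow> bool" where
  "phi_at U adj col \<phi> u v = holds U adj col (\<lambda>i. if i = 0 then u else v) \<phi>"

text \<open>T(G) for a graph G = (U, adj): all induced subgraphs (S, E) of \<phi>(G^+),
  where G^+ ranges over all colorings of U with the colors of C.
  Graphs are pairs (vertex set, adjacency predicate); adjacency is only
  meaningful on the vertex set (and set to False outside).\<close>

definition transduce :: "nat set \<Rightarrow> fo \<Rightarrow> 'a set \<Rightarrow> ('a \<Rightarrow> 'a \<Rightarrow> bool)
    \<Rightarrow> ('a set \<times> ('a \<Rightarrow> 'a \<Rightarrow> bool)) set" where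
  "transduce C \<phi> U adj =
     {(S, \<lambda>u v. u \<in> S \<and> v \<in> S \<and> u \<noteq> v \<and>
                 (phi_at U adj col \<phi> u v \<or> phi_at U adj col \<phi> v u))
      | S col. S \<subseteq> U \<and> (\<forall>c. c \<notin> C \<longrightarrow> col c = (\<lambda>_. False))
               \<and> (\<forall>c v. col c v \<longrightarrow> v \<in> U)}"

definition is_graph :: "'a set \<Rightarrow> ('a \<Rightarrow> 'a \<Rightarrow> bool) \<Rightarrow> bool" where
  "is_graph V E \<longleftrightarrow> finite V \<and> (\<forall>u\<in>V. \<forall>v\<in>V. E u v \<longrightarrow> E v u) \<and> (\<forall>u\<in>V. \<not> E u u)"

definition graph_iso :: "('a \<Rightarrow> 'b) \<Rightarrow> 'a set \<Rightarrow> ('a \<Rightarrow> 'a \<Rightarrow> bool) \<Rightarrow> 'b set \<Rightarrow> ('b \<Rightarrow> 'b \<Rightarrow> bool) \<Rightarrow> bool" where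
  "graph_iso f V E V' E' \<longleftrightarrow> bij_betw f V V' \<and> (\<forall>u\<in>V. \<forall>v\<in>V. E u v \<longleftrightarrow> E' (f u) (f v))"

definition rook_verts :: "nat \<Rightarrow> nat \<Rightarrow> (nat \<times> nat) set" where
  "rook_verts a b = {1..a} \<times> {1..b}"

definition rook_adj :: "nat \<times> nat \<Rightarrow> nat \<times> nat \<Rightarrow> bool" where
  "rook_adj p q \<longleftrightarrow> p \<noteq> q \<and> (fst p = fst q \<or> snd p = snd q)"

end

theory Submission
  imports Defs
begin

text \<open>Place the vertex v of the graph on the diagonal square (v+1, v+1) of a large rook
  graph and mark the square (u+1, v+1) whenever uv is an edge.  Two distinct diagonal squares
  have exactly two common neighbours in a rook graph, namely (u+1, v+1) and (v+1, u+1), so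
  they have a marked common neighbour iff uv is an edge.  Asking for a marked common neighbour
  is a first-order formula with a single colour.\<close>

definition common_marked_neighbour :: fo where
  "common_marked_neighbour = Ex 2 (Conj (Col 0 2) (Conj (Adj 0 2) (Adj 1 2)))"

lemma is_transduction_common_marked_neighbour: "is_transduction {0} common_marked_neighbour"
  by (auto simp: is_transduction_def common_marked_neighbour_def)

lemma phi_at_common_marked_neighbour:
  "phi_at U adj col common_marked_neighbour u v \<longleftrightarrow> (\<exists>z\<in>U. col 0 z \<and> adj u z \<and> adj v z)"
  by (simp add: phi_at_def common_marked_neighbour_def)

lemma transduceI:
  assumes "S \<subseteq> U" and "\<forall>c. c \<notin> C \<longrightarrow> col c = (\<lambda>_. False)" and "\<forall>c v. col c v \<longrightarrow> v \<in> U"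
  shows "(S, \<lambda>u v. u \<in> S \<and> v \<in> S \<and> u \<noteq> v \<and>
              (phi_at U adj col \<phi> u v \<or> phi_at U adj col \<phi> v u)) \<in> transduce C \<phi> U adj"
  using assms unfolding transduce_def by blast

definition rook_diag :: "nat \<Rightarrow> nat \<times> nat" where
  "rook_diag v = (Suc v, Suc v)"

lemma inj_rook_diag: "inj rook_diag"
  by (simp add: inj_def rook_diag_def)

lemma rook_adj_diag_common_iff:
  assumes "u \<noteq> v"
  shows "rook_adj (rook_diag u) z \<and> rook_adj (rook_diag v) z \<longleftrightarrow>
           z = (Suc u, Suc v) \<or> z = (Suc v, Suc u)"
  using assms by (cases z) (auto simp: rook_adj_def rook_diag_def)

lemma Suc_pair_in_rook_verts: "u \<le> n \<Longrightarrow> v \<le> n \<Longrightarrow> (Suc u, Suc v) \<in> rook_verts (Suc n) (Suc n)"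
  by (simp add: rook_verts_def)

definition edge_marks :: "nat set \<Rightarrow> (nat \<Rightarrow> nat \<Rightarrow> bool) \<Rightarrow> nat \<Rightarrow> nat \<times> nat \<Rightarrow> bool" where
  "edge_marks V E c p \<longleftrightarrow> c = 0 \<and> (\<exists>u\<in>V. \<exists>v\<in>V. E u v \<and> p = (Suc u, Suc v))"

lemma edge_marks_in_rook_verts:
  assumes "finite V" and "edge_marks V E c p"
  shows "p \<in> rook_verts (Suc (Max V)) (Suc (Max V))"
  using assms by (auto simp: edge_marks_def intro!: Suc_pair_in_rook_verts)

lemma diag_common_marked_neighbour_iff:
  assumes "is_graph V E" and "u \<in> V" "v \<in> V" "u \<noteq> v"
    and "\<forall>p. edge_marks V E 0 p \<longrightarrow> p \<in> U"
  shows "(\<exists>z\<in>U. edge_marks V E 0 z \<and> rook_adj (rook_diag u) z \<and> rook_adj (rook_diag v) z)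
           \<longleftrightarrow> E u v"
proof -
  have sym: "E v u \<longleftrightarrow> E u v"
    using assms(1-3) unfolding is_graph_def by blast
  have "(\<exists>z\<in>U. edge_marks V E 0 z \<and> rook_adj (rook_diag u) z \<and> rook_adj (rook_diag v) z)
          \<longleftrightarrow> (\<exists>z\<in>U. edge_marks V E 0 z \<and> (z = (Suc u, Suc v) \<or> z = (Suc v, Suc u)))"
    by (simp only: rook_adj_diag_common_iff[OF \<open>u \<noteq> v\<close>])
  also have "\<dots> \<longleftrightarrow> edge_marks V E 0 (Suc u, Suc v) \<or> edge_marks V E 0 (Suc v, Suc u)"
    using assms(5) by blast
  also have "\<dots> \<longleftrightarrow> E u v \<or> E v u"
    using assms(2,3) by (auto simp: edge_marks_def)
  finally show ?thesis
    using sym by blast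
qed

lemma graph_iso_rook_diag:
  assumes "is_graph V E" and "\<forall>p. edge_marks V E 0 p \<longrightarrow> p \<in> U"
  defines "S \<equiv> rook_diag ` V"
  shows "graph_iso rook_diag V E S (\<lambda>x y. x \<in> S \<and> y \<in> S \<and> x \<noteq> y \<and>
           (phi_at U rook_adj (edge_marks V E) common_marked_neighbour x y \<or>
            phi_at U rook_adj (edge_marks V E) common_marked_neighbour y x))"
  unfolding graph_iso_def phi_at_common_marked_neighbour
proof (intro conjI ballI)
  show "bij_betw rook_diag V S"
    unfolding S_def by (rule inj_on_imp_bij_betw[OF inj_on_subset[OF inj_rook_diag]]) simp
  fix u v
  assume uv: "u \<in> V" "v \<in> V"
  show "E u v \<longleftrightarrow> rook_diag u \<in> S \<and> rook_diag v \<in> S \<and> rook_diag u \<noteq> rook_diag v \<and>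
          ((\<exists>z\<in>U. edge_marks V E 0 z \<and> rook_adj (rook_diag u) z \<and> rook_adj (rook_diag v) z) \<or>
           (\<exists>z\<in>U. edge_marks V E 0 z \<and> rook_adj (rook_diag v) z \<and> rook_adj (rook_diag u) z))"
  proof (cases "u = v")
    case True
    moreover have "\<not> E u u"
      using assms(1) uv by (simp add: is_graph_def)
    ultimately show ?thesis
      by simp
  next
    case False
    have "rook_diag u \<in> S" "rook_diag v \<in> S" "rook_diag u \<noteq> rook_diag v"
      using uv False inj_rook_diag by (auto simp: S_def inj_def)
    moreover have "E v u \<longleftrightarrow> E u v"
      using assms(1) uv unfolding is_graph_def by blast
    ultimately show ?thesis
      unfolding diag_common_marked_neighbour_iff[OF assms(1) uv False assms(2)]
        diag_common_marked_neighbour_iff[OF assms(1) uv(2,1) not_sym[OF False] assms(2)]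
      by blast
  qed
qed

lemma graph_in_transduce_rook_graph:
  fixes V :: "nat set"
  assumes graph: "is_graph V E"
  shows "\<exists>a b S F f. (S, F) \<in> transduce {0} common_marked_neighbour (rook_verts a b) rook_adj
           \<and> graph_iso f V E S F"
proof -
  define n where "n = Suc (Max V)"
  have "finite V"
    using graph unfolding is_graph_def by blast
  then have marks: "\<forall>c p. edge_marks V E c p \<longrightarrow> p \<in> rook_verts n n"
    using edge_marks_in_rook_verts n_def by blast
  have diag: "rook_diag ` V \<subseteq> rook_verts n n"
    using \<open>finite V\<close> by (auto simp: n_def rook_diag_def intro!: Suc_pair_in_rook_verts)
  have one_colour: "\<forall>c. c \<notin> {0} \<longrightarrow> edge_marks V E c = (\<lambda>_. False)"
    by (auto simp: edge_marks_def)
  show ?thesis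
    using transduceI[OF diag one_colour marks] graph_iso_rook_diag[OF graph spec[OF marks, of 0]]
    by blast
qed

theorem lemma2p6:
  shows "\<exists>C \<phi>. is_transduction C \<phi> \<and>
           (\<forall>(V :: nat set) E. is_graph V E \<longrightarrow>
              (\<exists>a b S F f. (S, F) \<in> transduce C \<phi> (rook_verts a b) rook_adj
                           \<and> graph_iso f V E S F))"
  using is_transduction_common_marked_neighbour graph_in_transduce_rook_graph by blast

end
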